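(* Let $\mathcal D_2:=\{y\in\mathbb C:(\Im y)^2<(\lambda_1+\lambda_2)\Re y+\frac14\lambda_2(2\lambda_1+\lambda_2)\}$. Then $\mathcal D_2\subset S$, where $S$ is the set defined below; consequently $\widehat{\boldsymbol\nu}_1$ extends to an analytic function on $\mathcal D_2$.
   Context: Let $\lambda_1,\lambda_2>0$ (with $\lambda_1=2(\delta_2-\delta_1)$, $\lambda_2=2(\delta_3-\delta_2)$ for reals $\delta_1<\delta_2<\delta_3$). $\widehat{\boldsymbol\nu}_1(y)=\int_0^\infty e^{-yu}\boldsymbol\nu_1(du)$ is the Laplace transform of the lateral measure $\boldsymbol\nu_1$ of the stationary gap process $(G,H)$ of the degenerate rank-based three-particle system, i.e. the solution of $G(t)=G(0)-\tfrac{\lambda_1}{2}t-W(t)-\tfrac12L^H(t)+L^G(t)$, $H(t)=H(0)-\tfrac{\lambda_2}{2}t+W(t)-\tfrac12L^G(t)+L^H(t)$ ($W$ a standard Brownian motion, $L^Z$ the local time of $Z$ at $0$), with invariant law $\boldsymbol\pi$, $\boldsymbol\nu_1(A)=\mathbb E^{\boldsymbol\pi}\int_0^2\mathbf 1_A(H(t))dL^G(t)$, $\boldsymbol\nu_2(A)=\mathbb E^{\boldsymbol\pi}\int_0^2\mathbf 1_A(G(t))dL^H(t)$; these satisfy the BAR $[(x-y)^2+\lambda_1x+\lambda_2y]\widehat{\boldsymbol\pi}(x,y)=(x-\tfrac y2)\widehat{\boldsymbol\nu}_1(y)+(y-\tfrac x2)\widehat{\boldsymbol\nu}_2(x)$ on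 $[0,\infty)^2$. Let $y^+=\lambda_1^2/(4(\lambda_1+\lambda_2))$, $A_1^+(y)=-\frac{\lambda_1}2+y+\sqrt{\frac{\lambda_1^2}4-(\lambda_1+\lambda_2)y}$ (principal square root, analytic on $\mathbb C\setminus[y^+,\infty)$, with $\Re A_1^+(y):=y-\lambda_1/2$ on the cut), and $S:=\{\Re y\ge0\}\cup\{\Re A_1^+(y)>0\}$, an open connected set to which $\widehat{\boldsymbol\nu}_1$ extends analytically. *)

theory Defs
  imports "HOL-Analysis.Analysis"
begin

text \<open>On the cut y real > y^+ the radicand is a negative real, csqrt is purely imaginary,
 so Re A_1^+(y) = y - l1/2, matching the paper's convention.\<close>
definition A1plus :: "real \<Rightarrow> real \<Rightarrow> complex \<Rightarrow> complex" where
  "A1plus l1 l2 y = - complex_of_real (l1 / 2) + y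
      + csqrt (complex_of_real (l1\<^sup>2 / 4) - complex_of_real (l1 + l2) * y)"

definition S_dom :: "real \<Rightarrow> real \<Rightarrow> complex set" where
  "S_dom l1 l2 = {y. Re y \<ge> 0} \<union> {y. Re (A1plus l1 l2 y) > 0}"

definition D2_dom :: "real \<Rightarrow> real \<Rightarrow> complex set" where
  "D2_dom l1 l2 = {y. (Im y)\<^sup>2 < (l1 + l2) * Re y + (1/4) * l2 * (2 * l1 + l2)}"

end

theory Submission
  imports Defs
begin

text \<open>Only the real part of \<open>y\<close> matters. On \<open>\<D>\<^sub>2\<close> we have \<open>Re y > -\<lambda>\<^sub>2\<close>. If moreover
  \<open>a = Re y < 0\<close>, the radicand \<open>w\<close> in \<open>A\<^sub>1\<^sup>+(y)\<close> satisfies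
  \<open>Re w = (\<lambda>\<^sub>1/2 - a)\<^sup>2 - a (a + \<lambda>\<^sub>2) > (\<lambda>\<^sub>1/2 - a)\<^sup>2\<close>, and since \<open>(Re (csqrt w))\<^sup>2 \<ge> Re w\<close>
  this forces \<open>Re (csqrt w) > \<lambda>\<^sub>1/2 - a\<close>, i.e. \<open>Re A\<^sub>1\<^sup>+(y) > 0\<close>.\<close>

lemma Re_csqrt_gt:
  fixes w :: complex and c :: real
  assumes "0 \<le> c" and "c\<^sup>2 < Re w"
  shows "c < Re (csqrt w)"
proof -
  have "Re w = (Re (csqrt w))\<^sup>2 - (Im (csqrt w))\<^sup>2"
    by (metis Re_power2 power2_csqrt)
  then have "c\<^sup>2 < (Re (csqrt w))\<^sup>2"
    using assms(2) by (smt (verit) zero_le_power2)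
  then show ?thesis
    using Re_csqrt power_less_imp_less_base by blast
qed

lemma Re_A1plus_pos:
  assumes "0 \<le> l1" and "- l2 < Re y" and "Re y < 0"
  shows "0 < Re (A1plus l1 l2 y)"
proof -
  define a where "a = Re y"
  define w where "w = complex_of_real (l1\<^sup>2 / 4) - complex_of_real (l1 + l2) * y"
  have "a * (a + l2) < 0"
    using assms unfolding a_def by (intro mult_neg_pos) auto
  moreover have "Re w = (l1/2 - a)\<^sup>2 - a * (a + l2)"
    unfolding w_def a_def by (simp add: power2_eq_square algebra_simps)
  ultimately have "l1/2 - a < Re (csqrt w)"
    using assms unfolding a_def by (intro Re_csqrt_gt) auto
  then show ?thesis
    unfolding A1plus_def w_def[symmetric] a_def by simp
qed

lemma D2_dom_Re_gt:
  assumes "0 < l1" and "0 < l2" and "y \<in> D2_dom l1 l2"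
  shows "- l2 < Re y"
proof (rule ccontr)
  assume "\<not> - l2 < Re y"
  then have "(l1 + l2) * Re y \<le> (l1 + l2) * (- l2)"
    using assms by (intro mult_left_mono) auto
  moreover have "0 < (l1 + l2) * Re y + 1/4 * l2 * (2 * l1 + l2)"
    using assms(3) unfolding D2_dom_def by (smt (verit) mem_Collect_eq zero_le_power2)
  moreover have "(l1 + l2) * (- l2) + 1/4 * l2 * (2 * l1 + l2) = - (l2 * (2 * l1 + 3 * l2)) / 4"
    by (simp add: algebra_simps)
  moreover have "0 < l2 * (2 * l1 + 3 * l2)"
    using assms by simp
  ultimately show False
    by linarith
qed

theorem mainTheorem10:
  fixes l1 l2 :: real
  assumes "l1 > 0" and "l2 > 0"
  shows "D2_dom l1 l2 \<subseteq> S_dom l1 l2"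
proof
  fix y assume "y \<in> D2_dom l1 l2"
  with assms have "- l2 < Re y"
    by (rule D2_dom_Re_gt)
  then have "0 \<le> Re y \<or> 0 < Re (A1plus l1 l2 y)"
    using assms Re_A1plus_pos[of l1 l2 y] by linarith
  then show "y \<in> S_dom l1 l2"
    unfolding S_dom_def by blast
qed

end
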